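(* Let $2\leq s<t$ and let $(a_1,\dots,a_t,n_1,\dots,n_s)$ be integers with $a_1\geq\cdots\geq a_t\geq 2$, $n_1\geq\cdots\geq n_s\geq 2$, $a_l\neq n_j$ for all $l,j$, and $\prod_{l=1}^t a_l!=\prod_{j=1}^s n_j!$. Let $i_2,\dots,i_s$ be distinct elements of $\{2,\dots,t\}$ with $n_1>a_1$ and $n_j>a_{i_j}$ for $j=2,\dots,s$. Put $m_1=a_1+1$, $k_1=n_1-a_1$, $m_j=a_{i_j}+1$, $k_j=n_j-a_{i_j}$ ($j=2,\dots,s$), and $\Delta(m,k)=m(m+1)\cdots(m+k-1)$, so that $\prod_{l\notin\{1,i_2,\dots,i_s\}}a_l!=\prod_{j=1}^s\Delta(m_j,k_j)$. Then: (i) none of the integers $m_1,m_1+1,\dots,m_1+k_1-1$ is a prime; (ii) with $a=\max_{l\notin\{1,i_2,\dots,i_s\}}a_l$, one has $$a\log(a)-a\leq\log(a!)\leq (k_1+\cdots+k_s)\log(2m_1).$$ *)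

theory Defs
  imports Complex_Main "HOL-Computational_Algebra.Primes"
begin

end

theory Submission
  imports Defs
begin

text \<open>
  A prime x with a_1 < x <= n_1 divides n_1!, hence the right-hand product, but it
  divides no a_l! because a_l <= a_1 < x; this is (i). By Bertrand's postulate there is
  a prime in (m_1, 2 m_1], so (i) forces n_j <= n_1 < 2 m_1 for every j. Hence
  n_j! <= a_(i_j)! (2 m_1)^(k_j), and after cancelling a_1!, a_(i_2)!, ..., a_(i_s)! from
  the identity, the product of the remaining a_l! -- a multiple of a! -- is at most
  (2 m_1)^(k_1 + ... + k_s). The lower bound on log(a!) is the term a^a/a! of the
  series of e^a.

  Bertrand's postulate is proved following Erdos: if there were no prime in (N, 2N],
  every prime factor of the central binomial coefficient would be at most 2N/3, and
  those above sqrt(2N) would occur only to the first power, which makes the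
  coefficient much smaller than its lower bound 4^N/(2N) once N is large. Small N are
  covered by an explicit chain of primes, each less than twice its predecessor.
\<close>

section \<open>Legendre's formula\<close>

lemma multiplicity_eq_card_prime_power_divisors:
  fixes p n B :: nat
  assumes "prime p" "0 < n" "n \<le> B"
  shows "multiplicity p n = card {i\<in>{1..B}. p ^ i dvd n}"
proof -
  have "multiplicity p n < 2 ^ multiplicity p n" by (rule less_exp)
  also have "\<dots> \<le> p ^ multiplicity p n"
    using prime_ge_2_nat[OF assms(1)] by (rule power_mono) simp
  also have "\<dots> \<le> n" using multiplicity_dvd[of p n] assms(2) by (rule dvd_imp_le)
  finally have mult_le: "multiplicity p n \<le> B" using assms(3) by simp
  have "\<not> is_unit p" using prime_gt_1_nat[OF assms(1)] by simp
  then have dvd_iff: "p ^ i dvd n \<longleftrightarrow> i \<le> multiplicity p n" for i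
    using power_dvd_iff_le_multiplicity[of n p i] assms(2) by simp
  have "{i\<in>{1..B}. p ^ i dvd n} = {1..multiplicity p n}"
    unfolding dvd_iff using mult_le by auto
  then show ?thesis by simp
qed

lemma multiplicity_fact:
  fixes p n B :: nat
  assumes "prime p" "n \<le> B"
  shows "multiplicity p (fact n :: nat) = (\<Sum>i=1..B. n div p ^ i)"
  using assms(2)
proof (induction n)
  case 0
  then show ?case by simp
next
  case (Suc n)
  have "multiplicity p (fact (Suc n) :: nat) = multiplicity p (Suc n * fact n)"
    by (simp only: fact_Suc of_nat_id)
  also have "\<dots> = multiplicity p (Suc n) + multiplicity p (fact n :: nat)"
    by (rule prime_elem_multiplicity_mult_distrib) (use assms(1) in auto)
  also have "multiplicity p (Suc n) = card {i\<in>{1..B}. p ^ i dvd Suc n}"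
    using Suc.prems by (intro multiplicity_eq_card_prime_power_divisors assms(1)) auto
  also have "\<dots> = card ({1..B} \<inter> {i. p ^ i dvd Suc n})"
    by (intro arg_cong[where f = card]) auto
  also have "\<dots> = (\<Sum>i=1..B. if p ^ i dvd Suc n then 1 else 0)"
    by (simp add: sum.If_cases)
  also have "multiplicity p (fact n :: nat) = (\<Sum>i=1..B. n div p ^ i)"
    using Suc by simp
  also have "(\<Sum>i=1..B. if p ^ i dvd Suc n then 1 else 0) + (\<Sum>i=1..B. n div p ^ i)
      = (\<Sum>i=1..B. Suc n div p ^ i)"
    by (subst sum.distrib[symmetric], intro sum.cong refl) (auto simp: div_Suc dvd_eq_mod_eq_0)
  finally show ?case .
qed

section \<open>The primorial\<close>

lemma prod_primes_dvd:
  fixes n :: nat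
  assumes "finite A" "\<And>p. p \<in> A \<Longrightarrow> prime p" "\<And>p. p \<in> A \<Longrightarrow> p dvd n"
  shows "\<Prod>A dvd n"
  using assms
proof (induction A rule: finite_induct)
  case (insert p A)
  have "coprime p (\<Prod>A)"
    using insert by (intro prod_coprime_right) (auto intro: primes_coprime)
  then show ?case using insert by (simp add: divides_mult)
qed simp

lemma binomial_odd_le_four_pow: "(2 * m + 1) choose m \<le> (4::nat) ^ m"
proof -
  have "2 * ((2 * m + 1) choose m) = (\<Sum>k\<in>{m, m + 1}. (2 * m + 1) choose k)"
    using binomial_symmetric[of m "2 * m + 1"] by simp
  also have "\<dots> \<le> (\<Sum>k\<le>2 * m + 1. (2 * m + 1) choose k)" by (intro sum_mono2) auto
  also have "\<dots> = 2 ^ (2 * m + 1)" by (rule choose_row_sum)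
  also have "\<dots> = 2 * 4 ^ m" by (simp add: power_mult)
  finally show ?thesis by simp
qed

lemma prod_primes_between_dvd_binomial:
  "\<Prod>{p::nat. prime p \<and> m + 1 < p \<and> p \<le> 2 * m + 1} dvd (2 * m + 1) choose m"
proof (rule prod_primes_dvd)
  fix p assume p: "p \<in> {p. prime p \<and> m + 1 < p \<and> p \<le> 2 * m + 1}"
  have "(fact (2 * m + 1) :: nat) = fact m * fact (m + 1) * ((2 * m + 1) choose m)"
    using binomial_fact_lemma[of m "2 * m + 1"] by (simp add: algebra_simps)
  moreover have "p dvd (fact (2 * m + 1) :: nat)"
    using p prime_dvd_fact_iff[of p "2 * m + 1"] by blast
  moreover have "\<not> p dvd (fact m :: nat)" "\<not> p dvd (fact (m + 1) :: nat)"
    using p prime_dvd_fact_iff[of p m] prime_dvd_fact_iff[of p "m + 1"] by auto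
  ultimately show "p dvd (2 * m + 1) choose m"
    using p by (auto simp: prime_dvd_mult_iff)
qed auto

lemma primorial_odd_le:
  "\<Prod>{p::nat. prime p \<and> p \<le> 2 * m + 1} \<le> 4 ^ m * \<Prod>{p. prime p \<and> p \<le> m + 1}"
proof -
  let ?A = "{p::nat. prime p \<and> p \<le> m + 1}"
  let ?B = "{p::nat. prime p \<and> m + 1 < p \<and> p \<le> 2 * m + 1}"
  have "{p::nat. prime p \<and> p \<le> 2 * m + 1} = ?A \<union> ?B" by auto
  then have "\<Prod>{p::nat. prime p \<and> p \<le> 2 * m + 1} = \<Prod>?B * \<Prod>?A"
    by (simp add: prod.union_disjoint[symmetric] disjoint_iff mult.commute)
  also have "\<Prod>?B \<le> (2 * m + 1) choose m"
    by (rule dvd_imp_le[OF prod_primes_between_dvd_binomial]) simp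
  also have "\<dots> \<le> 4 ^ m" by (rule binomial_odd_le_four_pow)
  finally show ?thesis by simp
qed

lemma primorial_le_four_pow: "\<Prod>{p::nat. prime p \<and> p \<le> n} \<le> 4 ^ n"
proof (induction n rule: less_induct)
  case (less n)
  show ?case
  proof (cases "n \<le> 2")
    case True
    then have "{p::nat. prime p \<and> p \<le> n} = (if n = 2 then {2} else {})"
      by (auto dest: prime_ge_2_nat)
    then show ?thesis using True by simp
  next
    case n_gt_2: False
    show ?thesis
    proof (cases "even n")
      case True
      then have "\<not> prime n" using n_gt_2 prime_odd_nat by auto
      then have "prime p \<and> p \<le> n \<longleftrightarrow> prime p \<and> p \<le> n - 1" for p
        by (cases "p = n") auto
      then have "{p::nat. prime p \<and> p \<le> n} = {p. prime p \<and> p \<le> n - 1}"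
        by blast
      also have "\<Prod>\<dots> \<le> 4 ^ (n - 1)" using less n_gt_2 by simp
      also have "\<dots> \<le> 4 ^ n" by (rule power_increasing) simp_all
      finally show ?thesis .
    next
      case False
      then obtain m where n: "n = 2 * m + 1" by (rule oddE)
      have "m + 1 < n" using n n_gt_2 by simp
      have "\<Prod>{p::nat. prime p \<and> p \<le> n} \<le> 4 ^ m * \<Prod>{p. prime p \<and> p \<le> m + 1}"
        unfolding n by (rule primorial_odd_le)
      also have "\<dots> \<le> 4 ^ m * 4 ^ (m + 1)" using less[OF \<open>m + 1 < n\<close>] by simp
      also have "\<dots> = 4 ^ n" by (simp add: n flip: power_add)
      finally show ?thesis .
    qed
  qed
qed

section \<open>The central binomial coefficient\<close>

lemma double_div_le:
  fixes q N :: nat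
  assumes "0 < q"
  shows "(2 * N) div q \<le> 2 * (N div q) + (if q \<le> 2 * N then 1 else 0)"
proof (cases "q \<le> 2 * N")
  case True
  have "N = q * (N div q) + N mod q" by simp
  then have "N < q * (N div q) + q" using mod_less_divisor[OF assms, of N] by linarith
  then have "2 * N < q * (2 * (N div q) + 2)" by (simp add: algebra_simps)
  then have "(2 * N) div q < 2 * (N div q) + 2"
    using assms by (simp add: div_less_iff_less_mult mult.commute)
  then show ?thesis using True by simp
qed simp

lemma multiplicity_central_binomial:
  fixes p N :: nat
  assumes "prime p"
  shows "multiplicity p ((2 * N) choose N) + 2 * (\<Sum>i=1..2*N. N div p ^ i)
    = (\<Sum>i=1..2*N. (2 * N) div p ^ i)"
proof -
  have "(fact (2 * N) :: nat) = fact N * fact N * ((2 * N) choose N)"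
    using binomial_fact_lemma[of N "2 * N"] by simp
  then have "multiplicity p (fact (2 * N) :: nat)
      = 2 * multiplicity p (fact N :: nat) + multiplicity p ((2 * N) choose N)"
    using assms by (simp add: prime_elem_multiplicity_mult_distrib)
  then show ?thesis
    using multiplicity_fact[OF assms, of N "2 * N"] multiplicity_fact[OF assms, of "2 * N" "2 * N"]
    by simp
qed

lemma prime_power_multiplicity_central_binomial_le:
  fixes p N :: nat
  assumes "prime p" "1 \<le> N"
  shows "p ^ multiplicity p ((2 * N) choose N) \<le> 2 * N"
proof (rule ccontr)
  define v where "v = multiplicity p ((2 * N) choose N)"
  assume "\<not> p ^ multiplicity p ((2 * N) choose N) \<le> 2 * N"
  then have big: "2 * N < p ^ v" unfolding v_def by simp
  define S where "S = {1..2*N} \<inter> {i. p ^ i \<le> 2 * N}"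
  have "v + 2 * (\<Sum>i=1..2*N. N div p ^ i) = (\<Sum>i=1..2*N. (2 * N) div p ^ i)"
    unfolding v_def by (rule multiplicity_central_binomial[OF assms(1)])
  \<comment> \<open>each summand of Legendre's formula for the binomial coefficient is 0 or 1, and 0 once p^i > 2N\<close>
  also have "\<dots> \<le> (\<Sum>i=1..2*N. 2 * (N div p ^ i) + (if p ^ i \<le> 2 * N then 1 else 0))"
    using prime_gt_0_nat[OF assms(1)] by (intro sum_mono double_div_le) simp
  also have "\<dots> = 2 * (\<Sum>i=1..2*N. N div p ^ i) + card S"
    by (simp add: S_def sum.distrib sum_distrib_left sum.If_cases)
  finally have "v \<le> card S" by simp
  moreover have "S \<subseteq> {1..<v}"
  proof
    fix i assume "i \<in> S"
    then have "p ^ i < p ^ v" "1 \<le> i" using big unfolding S_def by auto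
    then show "i \<in> {1..<v}"
      using power_less_imp_less_exp[of p i v] prime_gt_1_nat[OF assms(1)] by simp
  qed
  then have "card S \<le> v - 1" using card_mono[of "{1..<v}" S] by simp
  moreover have "v \<noteq> 0" using big assms(2) by (intro notI) simp
  ultimately show False by simp
qed

lemma multiplicity_central_binomial_eq_0:
  fixes p N :: nat
  assumes "prime p" "3 \<le> p" "p \<le> N" "2 * N < 3 * p"
  shows "multiplicity p ((2 * N) choose N) = 0"
proof -
  \<comment> \<open>p divides N! exactly once and (2N)! exactly twice, since p^2 > 2N\<close>
  have "(2 * N) div p ^ i \<le> 2 * (N div p ^ i)" if "1 \<le> i" for i
  proof (cases "i = 1")
    case True
    have "N div p = 1" "(2 * N) div p = 2" using assms(3,4) by (auto intro: div_nat_eqI)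
    then show ?thesis using True by simp
  next
    case False
    have "2 * N < p * p" using assms(2,4) by (meson less_le_trans mult_le_mono1)
    also have "\<dots> \<le> p ^ i"
      using False that assms(2) power_increasing[of 2 i p] by (simp add: power2_eq_square)
    finally show ?thesis by simp
  qed
  then have "(\<Sum>i=1..2*N. (2 * N) div p ^ i) \<le> 2 * (\<Sum>i=1..2*N. N div p ^ i)"
    unfolding sum_distrib_left by (intro sum_mono) simp
  then show ?thesis using multiplicity_central_binomial[OF assms(1), of N] by simp
qed

lemma prime_factor_central_binomial_le:
  fixes p N :: nat
  assumes "4 \<le> N" "\<nexists>q. prime q \<and> N < q \<and> q \<le> 2 * N"
    and "p \<in> prime_factors ((2 * N) choose N)"
  shows "3 * p \<le> 2 * N"
proof -
  have p: "prime p" "p dvd (2 * N) choose N"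
    using assms(3) by (auto simp: in_prime_factors_iff)
  have "multiplicity p ((2 * N) choose N) \<noteq> 0"
    using assms(3) by (simp add: prime_factors_multiplicity)
  have "(fact (2 * N) :: nat) = fact N * fact N * ((2 * N) choose N)"
    using binomial_fact_lemma[of N "2 * N"] by simp
  then have "p dvd fact (2 * N)" using p(2) by (metis dvd_mult dvd_trans dvd_refl)
  then have "p \<le> N" using assms(2) p(1) prime_dvd_fact_iff[of p] not_le by blast
  show ?thesis
  proof (rule ccontr)
    assume "\<not> 3 * p \<le> 2 * N"
    then have "3 \<le> p" "2 * N < 3 * p" using assms(1) by auto
    then show False
      using multiplicity_central_binomial_eq_0[OF p(1) _ \<open>p \<le> N\<close>] \<open>multiplicity p _ \<noteq> 0\<close> by simp
  qed
qed

lemma prime_power_multiplicity_central_binomial_le_self: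
  fixes p N :: nat
  assumes "prime p" "1 \<le> N" "2 * N < p * p"
  shows "p ^ multiplicity p ((2 * N) choose N) \<le> p"
proof -
  define v where "v = multiplicity p ((2 * N) choose N)"
  have "p ^ v < p ^ 2"
    using prime_power_multiplicity_central_binomial_le[OF assms(1,2)] assms(3)
    unfolding v_def power2_eq_square by linarith
  then have "v < 2" by (rule power_less_imp_less_exp[OF prime_gt_1_nat[OF assms(1)]])
  then have "v = 0 \<or> v = 1" by linarith
  then show ?thesis using prime_ge_1_nat[OF assms(1)] unfolding v_def by auto
qed

lemma central_binomial_le_if_no_prime_between:
  fixes N :: nat
  assumes "4 \<le> N" "\<nexists>q. prime q \<and> N < q \<and> q \<le> 2 * N"
  shows "(2 * N) choose N \<le> (2 * N) ^ card {p. prime p \<and> p * p \<le> 2 * N} * 4 ^ (2 * N div 3)"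
proof -
  define C where "C = (2 * N) choose N"
  define P where "P = prime_factors C"
  define P1 where "P1 = {p\<in>P. p * p \<le> 2 * N}"
  have "C = (\<Prod>p\<in>P. p ^ multiplicity p C)"
    unfolding C_def P_def by (rule prime_factorization_nat) simp
  also have "\<dots> = (\<Prod>p\<in>P - P1. p ^ multiplicity p C) * (\<Prod>p\<in>P1. p ^ multiplicity p C)"
    by (rule prod.subset_diff) (auto simp: P1_def P_def)
  also have "\<dots> \<le> 4 ^ (2 * N div 3) * (2 * N) ^ card {p. prime p \<and> p * p \<le> 2 * N}"
  proof (rule mult_le_mono)
    have "(\<Prod>p\<in>P - P1. p ^ multiplicity p C) \<le> \<Prod>(P - P1)"
      using assms(1) unfolding P1_def P_def C_def
      by (intro prod_mono) (auto intro: prime_power_multiplicity_central_binomial_le_self)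
    also have "\<dots> \<le> \<Prod>{p. prime p \<and> p \<le> 2 * N div 3}"
    proof (intro dvd_imp_le prod_dvd_prod_subset subsetI)
      fix p assume "p \<in> P - P1"
      then have "prime p" "3 * p \<le> 2 * N"
        using prime_factor_central_binomial_le[OF assms] unfolding P_def C_def by auto
      then show "p \<in> {p. prime p \<and> p \<le> 2 * N div 3}"
        by (simp add: less_eq_div_iff_mult_less_eq mult.commute)
    qed (auto intro!: prod_pos dest: prime_gt_0_nat)
    also have "\<dots> \<le> 4 ^ (2 * N div 3)" by (rule primorial_le_four_pow)
    finally show "(\<Prod>p\<in>P - P1. p ^ multiplicity p C) \<le> 4 ^ (2 * N div 3)" .
    have "(\<Prod>p\<in>P1. p ^ multiplicity p C) \<le> (\<Prod>p\<in>P1. 2 * N)"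
      using assms(1) unfolding P1_def P_def C_def
      by (intro prod_mono) (auto intro: prime_power_multiplicity_central_binomial_le)
    also have "\<dots> = (2 * N) ^ card P1" by simp
    also have "\<dots> \<le> (2 * N) ^ card {p. prime p \<and> p * p \<le> 2 * N}"
      using assms(1) finite_subset[of "{p. prime p \<and> p * p \<le> 2 * N}" "{..2 * N}"]
      by (intro power_increasing card_mono) (auto simp: P1_def P_def intro: le_trans[OF le_square])
    finally show "(\<Prod>p\<in>P1. p ^ multiplicity p C) \<le> (2 * N) ^ card {p. prime p \<and> p * p \<le> 2 * N}" .
  qed
  finally show ?thesis unfolding C_def by (simp add: mult.commute)
qed

section \<open>Bertrand's postulate\<close>

lemma card_primes_square_le_add_one_le:
  fixes m k :: nat
  assumes "m < 4 ^ k"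
  shows "card {p. prime p \<and> p * p \<le> m} + 1 \<le> 2 ^ k"
proof -
  have "{p. prime p \<and> p * p \<le> m} \<subseteq> {2..<2 ^ k}"
  proof
    fix p assume p: "p \<in> {p. prime p \<and> p * p \<le> m}"
    then have "p * p < 2 ^ k * 2 ^ k"
      using assms by (simp flip: power_mult_distrib)
    then have "p < 2 ^ k" by (meson mult_le_mono not_le)
    then show "p \<in> {2..<2 ^ k}" using p prime_ge_2_nat by auto
  qed
  then have "card {p. prime p \<and> p * p \<le> m} \<le> card {2::nat..<2 ^ k}"
    by (rule card_mono[rotated]) simp
  then show ?thesis
    using zero_less_power[of "2::nat" k] by (simp only: card_atLeastLessThan) linarith
qed

lemma bertrand_postulate_large:
  fixes N :: nat
  assumes "8192 \<le> N"
  shows "\<exists>p. prime p \<and> N < p \<and> p \<le> 2 * N"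
proof (rule ccontr)
  assume no_prime: "\<nexists>p. prime p \<and> N < p \<and> p \<le> 2 * N"
  obtain j where j: "4 ^ j \<le> 2 * N" "2 * N < 4 ^ (j + 1)"
    using ex_power_ivl1[of 4 "2 * N"] assms by auto
  have "(4::nat) ^ 7 < 4 ^ (j + 1)" using j(2) assms by simp
  then have "7 \<le> j" using power_less_imp_less_exp[of "4::nat" 7 "j + 1"] by simp
  define c where "c = card {p. prime p \<and> p * p \<le> 2 * N}"
  have c_bound: "c + 1 \<le> 2 ^ (j + 1)"
    unfolding c_def using j(2) by (rule card_primes_square_le_add_one_le)
  have "real (4 ^ N) \<le> real (2 * N * ((2 * N) choose N))"
    using central_binomial_lower_bound[of N] assms by (simp add: field_simps)
  then have "4 ^ N \<le> 2 * N * ((2 * N) choose N)"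
    by (simp only: of_nat_le_iff)
  also have "\<dots> \<le> 2 * N * ((2 * N) ^ c * 4 ^ (2 * N div 3))"
    unfolding c_def using assms no_prime
    by (intro mult_le_mono2 central_binomial_le_if_no_prime_between) auto
  also have "\<dots> = (2 * N) ^ (c + 1) * 4 ^ (2 * N div 3)" by simp
  also have "\<dots> \<le> (4 ^ (j + 1)) ^ (c + 1) * 4 ^ (2 * N div 3)"
    using j(2) by (intro mult_le_mono1 power_mono) auto
  also have "\<dots> \<le> (4 ^ (j + 1)) ^ 2 ^ (j + 1) * 4 ^ (2 * N div 3)"
    using c_bound by (intro mult_le_mono1 power_increasing) auto
  also have "\<dots> = 4 ^ ((j + 1) * 2 ^ (j + 1) + 2 * N div 3)" by (simp add: power_mult power_add)
  finally have "N \<le> (j + 1) * 2 ^ (j + 1) + 2 * N div 3"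
    by (rule power_le_imp_le_exp[rotated]) simp
  moreover have "3 * (2 * N div 3) \<le> 2 * N" by simp
  ultimately have "3 * N \<le> 3 * ((j + 1) * 2 ^ (j + 1)) + 2 * N" by linarith
  then have "2 * N \<le> 12 * (j + 1) * 2 ^ j" by (simp add: algebra_simps)
  moreover have "12 * (j + 1) < 2 ^ j"
    using \<open>7 \<le> j\<close> by (induction j rule: dec_induct) simp_all
  then have "12 * (j + 1) * 2 ^ j < 2 ^ j * 2 ^ j" by simp
  then have "12 * (j + 1) * 2 ^ j < 4 ^ j" by (simp flip: power_mult_distrib)
  ultimately show False using j(1) by linarith
qed

lemma prime_nat_by_trial_division:
  fixes p r :: nat
  assumes "1 < p" "p < r * r" "\<forall>d\<in>set [2..<r]. d * d \<le> p \<longrightarrow> \<not> d dvd p"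
  shows "prime p"
proof (rule ccontr)
  assume "\<not> prime p"
  then obtain d where d: "d dvd p" "d \<noteq> 1" "d \<noteq> p" using assms(1) prime_nat_iff by auto
  then obtain e where e: "p = d * e" by blast
  have "d \<noteq> 0" "e \<noteq> 1" using d e assms(1) by auto
  moreover have "e \<noteq> 0" using e assms(1) by (intro notI) simp
  ultimately have "2 \<le> d" "2 \<le> e" using d(2) by linarith+
  define m where "m = min d e"
  have "m dvd p" "2 \<le> m" "m * m \<le> p"
    using e \<open>2 \<le> d\<close> \<open>2 \<le> e\<close> unfolding m_def by (auto simp: min_def intro: mult_le_mono)
  moreover have "m < r" using \<open>m * m \<le> p\<close> assms(2) by (meson le_less_trans mult_le_mono not_le)
  ultimately show False using assms(3) by auto
qed

lemma bertrand_postulate_by_prime_chain: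
  fixes q N :: nat
  assumes "successively (\<lambda>p p'. p < p' \<and> p' \<le> 2 * p) (q # ps)" "\<forall>p\<in>set ps. prime p"
    and "q \<le> N" "N < last (q # ps)"
  shows "\<exists>p. prime p \<and> N < p \<and> p \<le> 2 * N"
  using assms
proof (induction ps arbitrary: q)
  case (Cons p ps)
  show ?case
  proof (cases "N < p")
    case True
    then show ?thesis using Cons.prems by auto
  next
    case False
    then show ?thesis using Cons.prems by (intro Cons.IH[of p]) auto
  qed
qed simp

lemma bertrand_postulate:
  fixes N :: nat
  assumes "1 \<le> N"
  shows "\<exists>p. prime p \<and> N < p \<and> p \<le> 2 * N"
proof (cases "N < 8192")
  case True
  define ps :: "nat list" where "ps = [2, 3, 5, 7, 13, 23, 43, 83, 163, 317, 631, 1259, 2503, 5003, 9973]"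
  have chain: "successively (\<lambda>p p'. p < p' \<and> p' \<le> 2 * p) (1 # ps)" by (simp add: ps_def)
  have primes: "\<forall>p\<in>set ps. prime p"
    unfolding ps_def list.set ball_simps
    by (intro conjI TrueI; rule prime_nat_by_trial_division[where r = 100]; simp add: upt_rec)
  show ?thesis
    using assms True by (intro bertrand_postulate_by_prime_chain[OF chain primes]) (simp_all add: ps_def)
qed (use bertrand_postulate_large in simp)

lemma no_primes_between_imp_less_double:
  fixes m k :: nat
  assumes "1 \<le> m" "\<And>x. m \<le> x \<Longrightarrow> x \<le> k \<Longrightarrow> \<not> prime x"
  shows "k < 2 * m"
proof -
  obtain p where "prime p" "m < p" "p \<le> 2 * m" using bertrand_postulate[OF assms(1)] by blast
  then show ?thesis using assms(2)[of p] by fastforce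
qed

section \<open>Logarithms of factorials\<close>

lemma pow_div_fact_le_exp:
  fixes x :: real
  assumes "0 \<le> x"
  shows "x ^ n / fact n \<le> exp x"
proof -
  have "(\<Sum>k\<in>{n}. x ^ k / fact k) \<le> (\<Sum>k. x ^ k / fact k)"
    using summable_exp[of x] assms
    by (intro sum_le_suminf) (auto simp: divide_inverse mult.commute)
  then show ?thesis by (simp add: exp_def divide_inverse mult.commute scaleR_conv_of_real)
qed

lemma ln_fact_ge:
  assumes "1 \<le> n"
  shows "real n * ln (real n) - real n \<le> ln (fact n)"
proof -
  have "real n ^ n \<le> exp (real n) * fact n"
    using pow_div_fact_le_exp[of "real n" n] by (simp add: field_simps)
  then have "ln (real n ^ n) \<le> ln (exp (real n) * fact n)"
    using assms by (subst ln_le_cancel_iff) auto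
  then show ?thesis using assms by (simp add: ln_mult ln_realpow)
qed

lemma ln_le_mult_ln_of_le_pow:
  fixes x M K :: nat
  assumes "1 \<le> x" "0 < M" "x \<le> M ^ K"
  shows "ln (real x) \<le> real K * ln (real M)"
proof -
  have "real x \<le> real M ^ K" using assms(3) by (simp flip: of_nat_power)
  then have "ln (real x) \<le> ln (real M ^ K)" using assms(1,2) by (subst ln_le_cancel_iff) auto
  then show ?thesis using assms(2) by (simp add: ln_realpow)
qed

section \<open>Products of factorials\<close>

lemma fact_le_fact_mult_pow:
  fixes m k :: nat
  assumes "m \<le> k"
  shows "(fact k :: nat) \<le> fact m * k ^ (k - m)"
proof -
  have "(fact k :: nat) = fact m * (fact k div fact m)"
    by (rule dvd_mult_div_cancel[symmetric, OF fact_dvd[OF assms]])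
  also have "\<dots> \<le> fact m * k ^ (k - m)"
    using fact_div_fact_le_pow[of "k - m" k] assms by simp
  finally show ?thesis .
qed

lemma prod_fact_le_prod_fact_mult_pow:
  fixes b c :: "'j \<Rightarrow> nat"
  assumes "\<And>j. j \<in> J \<Longrightarrow> b j \<le> c j" "\<And>j. j \<in> J \<Longrightarrow> c j \<le> M"
  shows "(\<Prod>j\<in>J. fact (c j) :: nat) \<le> (\<Prod>j\<in>J. fact (b j)) * M ^ (\<Sum>j\<in>J. c j - b j)"
proof -
  have "(\<Prod>j\<in>J. fact (c j) :: nat) \<le> (\<Prod>j\<in>J. fact (b j) * M ^ (c j - b j))"
  proof (rule prod_mono)
    fix j assume j: "j \<in> J"
    have "(fact (c j) :: nat) \<le> fact (b j) * c j ^ (c j - b j)"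
      using assms(1)[OF j] by (rule fact_le_fact_mult_pow)
    also have "\<dots> \<le> fact (b j) * M ^ (c j - b j)"
      using assms(2)[OF j] by (intro mult_le_mono2 power_mono) auto
    finally show "0 \<le> (fact (c j) :: nat) \<and> fact (c j) \<le> fact (b j) * M ^ (c j - b j)"
      by simp
  qed
  then show ?thesis by (simp add: prod.distrib power_sum)
qed

lemma prime_dvd_prod_fact_imp_le:
  fixes f :: "'l \<Rightarrow> nat"
  assumes "finite L" "prime p" "p dvd (\<Prod>l\<in>L. fact (f l) :: nat)"
  shows "\<exists>l\<in>L. p \<le> f l"
  using assms prime_dvd_prod_iff[of L p "\<lambda>l. fact (f l)"] prime_dvd_fact_iff[of p] by auto

lemma not_prime_between_of_prod_fact_eq:
  fixes a :: "'l \<Rightarrow> nat" and n :: "'j \<Rightarrow> nat"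
  assumes "finite L" "finite J" "(\<Prod>l\<in>L. fact (a l) :: nat) = (\<Prod>j\<in>J. fact (n j))"
    and "\<And>l. l \<in> L \<Longrightarrow> a l \<le> b" "j \<in> J" "b < x" "x \<le> n j"
  shows "\<not> prime x"
proof
  assume "prime x"
  have "x dvd (fact (n j) :: nat)" using assms(6,7) by (intro dvd_fact) auto
  also have "\<dots> dvd (\<Prod>j\<in>J. fact (n j))" using assms(2,5) by (rule dvd_prodI)
  also have "\<dots> = (\<Prod>l\<in>L. fact (a l))" using assms(3) by simp
  finally obtain l where "l \<in> L" "x \<le> a l"
    using prime_dvd_prod_fact_imp_le[OF assms(1) \<open>prime x\<close>] by blast
  then show False using assms(4,6) by fastforce
qed

lemma bij_betw_fun_upd_insert:
  assumes "inj_on f A" "x \<notin> A" "y \<notin> f ` A"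
  shows "bij_betw (f(x := y)) (insert x A) (insert y (f ` A))"
proof -
  have "inj_on (f(x := y)) A" using assms(1,2) by (auto simp: inj_on_def)
  moreover have "(f(x := y)) ` A = f ` A" using assms(2) by auto
  ultimately show ?thesis using assms(3) by (auto simp: bij_betw_def)
qed

lemma fact_le_pow_of_prod_fact_eq:
  fixes a :: "'l \<Rightarrow> nat" and n :: "'j \<Rightarrow> nat" and g :: "'j \<Rightarrow> 'l"
  assumes "finite L" "I \<subseteq> L" "bij_betw g J I" "l \<in> L - I"
    and "(\<Prod>l\<in>L. fact (a l) :: nat) = (\<Prod>j\<in>J. fact (n j))"
    and "\<And>j. j \<in> J \<Longrightarrow> a (g j) \<le> n j" "\<And>j. j \<in> J \<Longrightarrow> n j \<le> M"
  shows "(fact (a l) :: nat) \<le> M ^ (\<Sum>j\<in>J. n j - a (g j))"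
proof -
  have "(\<Prod>l\<in>I. fact (a l)) * (\<Prod>l\<in>L - I. fact (a l)) = (\<Prod>j\<in>J. fact (n j) :: nat)"
    using assms(1,2,5) by (simp add: prod.subset_diff[of I L] mult.commute)
  also have "\<dots> \<le> (\<Prod>j\<in>J. fact (a (g j))) * M ^ (\<Sum>j\<in>J. n j - a (g j))"
    using assms(6,7) by (rule prod_fact_le_prod_fact_mult_pow)
  also have "(\<Prod>j\<in>J. fact (a (g j))) = (\<Prod>l\<in>I. fact (a l))"
    using prod.reindex_bij_betw[OF assms(3)] by simp
  finally have "(\<Prod>l\<in>L - I. fact (a l)) \<le> M ^ (\<Sum>j\<in>J. n j - a (g j))"
    by (simp add: prod_pos)
  moreover have "(fact (a l) :: nat) \<le> (\<Prod>l\<in>L - I. fact (a l))"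
    using assms(1,4) by (intro dvd_imp_le dvd_prodI) (auto intro: prod_pos)
  ultimately show ?thesis by simp
qed

lemma fact_remaining_le_pow:
  fixes a n i :: "nat \<Rightarrow> nat"
  assumes "2 \<le> s" "inj_on i {2..s}" "i ` {2..s} \<subseteq> {2..t}"
    and "(\<Prod>l=1..t. fact (a l) :: nat) = (\<Prod>j=1..s. fact (n j))"
    and "a 1 < n 1" "\<And>j. j \<in> {2..s} \<Longrightarrow> a (i j) < n j" "\<And>j. j \<in> {1..s} \<Longrightarrow> n j \<le> M"
    and "l \<in> {1..t} - ({1} \<union> i ` {2..s})"
  shows "(fact (a l) :: nat) \<le> M ^ ((n 1 - a 1) + (\<Sum>j=2..s. n j - a (i j)))"
proof -
  have "{1..s} = insert 1 {2..s}" using assms(1) by auto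
  moreover have "1 \<notin> i ` {2..s}" using assms(3) by auto
  \<comment> \<open>pairs n_j with a_(i_j), where i_1 = 1\<close>
  ultimately have bij: "bij_betw (i(1 := 1)) {1..s} ({1} \<union> i ` {2..s})"
    using bij_betw_fun_upd_insert[OF assms(2), of 1 1] by simp
  have "a ((i(1 := 1)) j) \<le> n j" if "j \<in> {1..s}" for j
  proof (cases "j = 1")
    case False
    then have "j \<in> {2..s}" using that by auto
    then show ?thesis using assms(6) False by fastforce
  qed (use assms(5) in simp)
  then have "(fact (a l) :: nat) \<le> M ^ (\<Sum>j=1..s. n j - a ((i(1 := 1)) j))"
    using assms(3,4,7,8) by (intro fact_le_pow_of_prod_fact_eq[OF _ _ bij]) auto
  also have "(\<Sum>j=1..s. n j - a ((i(1 := 1)) j))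
      = (n 1 - a 1) + (\<Sum>j=2..s. n j - a ((i(1 := 1)) j))"
    using assms(1) by (subst sum.atLeast_Suc_atMost) (simp_all add: numeral_2_eq_2)
  also have "(\<Sum>j=2..s. n j - a ((i(1 := 1)) j)) = (\<Sum>j=2..s. n j - a (i j))"
    by (rule sum.cong) auto
  finally show ?thesis .
qed

theorem lemma2p3:
  fixes s t :: nat and a n i :: "nat \<Rightarrow> nat"
  assumes st: "2 \<le> s" "s < t"
    and a_mono: "\<And>l l'. 1 \<le> l \<Longrightarrow> l \<le> l' \<Longrightarrow> l' \<le> t \<Longrightarrow> a l' \<le> a l"
    and a_ge2: "\<And>l. 1 \<le> l \<Longrightarrow> l \<le> t \<Longrightarrow> 2 \<le> a l"
    and n_mono: "\<And>j j'. 1 \<le> j \<Longrightarrow> j \<le> j' \<Longrightarrow> j' \<le> s \<Longrightarrow> n j' \<le> n j"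
    and n_ge2: "\<And>j. 1 \<le> j \<Longrightarrow> j \<le> s \<Longrightarrow> 2 \<le> n j"
    and a_ne_n: "\<And>l j. l \<in> {1..t} \<Longrightarrow> j \<in> {1..s} \<Longrightarrow> a l \<noteq> n j"
    and fact_eq: "(\<Prod>l=1..t. fact (a l) :: nat) = (\<Prod>j=1..s. fact (n j))"
    and i_inj: "inj_on i {2..s}"
    and i_range: "i ` {2..s} \<subseteq> {2..t}"
    and n1_gt: "n 1 > a 1"
    and nj_gt: "\<And>j. j \<in> {2..s} \<Longrightarrow> n j > a (i j)"
  shows "(\<forall>x \<in> {a 1 + 1 ..< (a 1 + 1) + (n 1 - a 1)}. \<not> prime x)
    \<and> (let A = Max (a ` ({1..t} - ({1} \<union> i ` {2..s})));
           K = (n 1 - a 1) + (\<Sum>j=2..s. n j - a (i j));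
           m1 = a 1 + 1
       in real A * ln (real A) - real A \<le> ln (fact A)
          \<and> ln (fact A) \<le> real K * ln (2 * real m1))"
proof -
  have no_prime: "\<forall>x \<in> {a 1 + 1 ..< (a 1 + 1) + (n 1 - a 1)}. \<not> prime x"
    using st n1_gt a_mono[of 1]
    by (intro ballI not_prime_between_of_prod_fact_eq[OF _ _ fact_eq, where b = "a 1" and j = 1]) auto
  have "n 1 < 2 * (a 1 + 1)"
    using no_prime n1_gt by (intro no_primes_between_imp_less_double) auto
  then have n_bound: "n j \<le> 2 * (a 1 + 1)" if "j \<in> {1..s}" for j
    using n_mono[of 1 j] that by auto
  define R where "R = {1..t} - ({1} \<union> i ` {2..s})"
  have "card ({1} \<union> i ` {2..s}) < card {1..t}"
    using st card_Un_le[of "{1}" "i ` {2..s}"] card_image_le[of "{2..s}" i] by simp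
  then have "R \<noteq> {}"
    using card_mono[of "{1} \<union> i ` {2..s}" "{1..t}"] unfolding R_def by auto
  then have "Max (a ` R) \<in> a ` R" by (intro Max_in) (auto simp: R_def)
  then obtain l where l: "l \<in> R" "Max (a ` R) = a l" by blast
  define K where "K = (n 1 - a 1) + (\<Sum>j=2..s. n j - a (i j))"
  have "(fact (a l) :: nat) \<le> (2 * (a 1 + 1)) ^ K"
    using st n1_gt nj_gt n_bound l(1) unfolding K_def R_def
    by (intro fact_remaining_le_pow[OF _ i_inj i_range fact_eq]) auto
  then have "ln (fact (a l)) \<le> real K * ln (2 * real (a 1 + 1))"
    using ln_le_mult_ln_of_le_pow[of "fact (a l)" "2 * (a 1 + 1)" K] by simp
  moreover have "real (a l) * ln (real (a l)) - real (a l) \<le> ln (fact (a l))"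
    using a_ge2[of l] l(1) unfolding R_def by (intro ln_fact_ge) auto
  ultimately show ?thesis
    using no_prime unfolding Let_def R_def[symmetric] K_def[symmetric] l(2) by simp
qed

end
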